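(* Let $A$ be a Banach algebra, and let $(\pi_1,X)$ be a left Banach $A$-module and $(X,\pi_2)$ a right Banach $A$-module. (i) If $A$ has a bounded left approximate identity for $X$, then the bilinear map $\pi_1^{r*}:X^*\times X\to A^*$ is Arens regular if and only if $X$ is reflexive. (ii) If $A$ has a bounded right approximate identity for $X$, then the bilinear map $\pi_2^{*}:X^*\times X\to A^*$ is Arens regular if and only if $X$ is reflexive.
   Context: For a bounded bilinear map $f:X\times Y\to Z$, the adjoint $f^*:Z^*\times X\to Y^*$ is defined by $\langle f^*(z^*,x),y\rangle=\langle z^*,f(x,y)\rangle$, and iterating gives $f^{**}$, $f^{***}:X^{**}\times Y^{**}\to Z^{**}$, etc. The flip is $f^r(y,x)=f(x,y)$; superscripts are applied successively left to right, so $\pi_1^{r*}$ is the adjoint of the flip $\pi_1^r:X\times A\to X$ of $\pi_1$. A bounded bilinear $f$ is Arens regular if $f^{***}=f^{r***r}$. A left Banach $A$-module $(\pi_1,X)$ is a Banach space $X$ with a bounded bilinear $\pi_1:A\times X\to X$ satisfying $\pi_1(ab,x)=\pi_1(a,\pi_1(b,x))$; a right Banach $A$-module $(X,\pi_2)$ is defined analogously with $\pi_2:X\times A\to X$, $\pi_2(x,ab)=\pi_2(\pi_2(x,a),b)$. A bounded net $(e_\alpha)$ in $A$ is a left approximate identity for $X$ if $\pi_1(e_\alpha,x)\to x$ for all $x\in X$, and a right approximate identity for $X$ if $\pi_2(x,e_\alpha)\to x$ for all $x\in X$. *)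

theory Defs
  imports "HOL-Analysis.Analysis"
begin

definition adj ::
  "('a::real_normed_vector \<Rightarrow> 'b::real_normed_vector \<Rightarrow> 'c::real_normed_vector)
     \<Rightarrow> ('c \<Rightarrow>\<^sub>L real) \<Rightarrow> 'a \<Rightarrow> ('b \<Rightarrow>\<^sub>L real)" where
  "adj f = (\<lambda>z x. Blinfun (\<lambda>y. blinfun_apply z (f x y)))"

definition bflip :: "('a \<Rightarrow> 'b \<Rightarrow> 'c) \<Rightarrow> 'b \<Rightarrow> 'a \<Rightarrow> 'c" where
  "bflip f = (\<lambda>y x. f x y)"

definition arens_regular ::
  "('a::real_normed_vector \<Rightarrow> 'b::real_normed_vector \<Rightarrow> 'c::real_normed_vector) \<Rightarrow> bool" where
  "arens_regular f \<longleftrightarrow> adj (adj (adj f)) = bflip (adj (adj (adj (bflip f))))"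

definition canon_embed :: "'a::real_normed_vector \<Rightarrow> (('a \<Rightarrow>\<^sub>L real) \<Rightarrow>\<^sub>L real)" where
  "canon_embed x = Blinfun (\<lambda>f. blinfun_apply f x)"

definition reflexive_space :: "'a::real_normed_vector itself \<Rightarrow> bool" where
  "reflexive_space _ \<longleftrightarrow> surj (canon_embed :: 'a \<Rightarrow> _)"

definition left_banach_module ::
  "('a::real_normed_algebra \<Rightarrow> 'x::real_normed_vector \<Rightarrow> 'x) \<Rightarrow> bool" where
  "left_banach_module \<pi>1 \<longleftrightarrow> bounded_bilinear \<pi>1 \<and>
     (\<forall>a b x. \<pi>1 (a * b) x = \<pi>1 a (\<pi>1 b x))"

definition right_banach_module ::
  "('x::real_normed_vector \<Rightarrow> 'a::real_normed_algebra \<Rightarrow> 'x) \<Rightarrow> bool" where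
  "right_banach_module \<pi>2 \<longleftrightarrow> bounded_bilinear \<pi>2 \<and>
     (\<forall>a b x. \<pi>2 x (a * b) = \<pi>2 (\<pi>2 x a) b)"

(* Bounded approximate identities for X: a bounded net e indexed along a
  proper filter F (nets = families converging along a filter). *)
definition bounded_left_approx_identity ::
  "('a::real_normed_algebra \<Rightarrow> 'x::real_normed_vector \<Rightarrow> 'x) \<Rightarrow> ('i \<Rightarrow> 'a) \<Rightarrow> 'i filter \<Rightarrow> bool" where
  "bounded_left_approx_identity \<pi>1 e F \<longleftrightarrow> F \<noteq> bot \<and> bounded (range e) \<and>
     (\<forall>x. ((\<lambda>\<alpha>. \<pi>1 (e \<alpha>) x) \<longlongrightarrow> x) F)"

definition bounded_right_approx_identity ::
  "('x::real_normed_vector \<Rightarrow> 'a::real_normed_algebra \<Rightarrow> 'x) \<Rightarrow> ('i \<Rightarrow> 'a) \<Rightarrow> 'i filter \<Rightarrow> bool" where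
  "bounded_right_approx_identity \<pi>2 e F \<longleftrightarrow> F \<noteq> bot \<and> bounded (range e) \<and>
     (\<forall>x. ((\<lambda>\<alpha>. \<pi>2 x (e \<alpha>)) \<longlongrightarrow> x) F)"

end

theory Submission
  imports Defs
begin

text \<open>
  If \<open>X\<close> is reflexive, every bounded bilinear map whose second argument ranges over \<open>X\<close>
  is Arens regular: writing \<open>n = \<iota> y\<close> with \<open>\<iota> : X \<rightarrow> X\<^sup>*\<^sup>*\<close> the canonical embedding,
  both sides of \<open>f\<^sup>*\<^sup>*\<^sup>* = f\<^sup>r\<^sup>*\<^sup>*\<^sup>*\<^sup>r\<close> evaluated at \<open>(m, n, \<Phi>)\<close> reduce to \<open>m(f\<^sup>r\<^sup>*(\<Phi>, y))\<close>.

  Conversely let \<open>\<rho> : X \<times> A \<rightarrow> X\<close> have a bounded approximate identity \<open>(e\<^sub>\<alpha>)\<close> and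
  \<open>g = \<rho>\<^sup>* : X\<^sup>* \<times> X \<rightarrow> A\<^sup>*\<close>. By Hahn--Banach, the functional \<open>\<psi> \<mapsto> lim \<psi>(e\<^sub>\<alpha>)\<close>, defined where
  the limit exists, extends to some \<open>E \<in> A\<^sup>*\<^sup>*\<close>; then \<open>E(g(\<xi>, x)) = \<xi>(x)\<close>, so \<open>g\<^sup>*\<^sup>*(n, E) = n\<close> and
  \<open>g\<^sup>r\<^sup>*\<^sup>*(m, E) = m \<circ> \<iota>\<close>. Arens regularity at \<open>(m, n, E)\<close> gives \<open>m(n) = n(m \<circ> \<iota>)\<close>; if \<open>n\<close>
  were outside the closed subspace \<open>\<iota>(X)\<close>, a functional \<open>m\<close> vanishing on \<open>\<iota>(X)\<close> with \<open>m(n) = 1\<close>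
  would contradict this. Part (i) is part (ii) for the flip of \<open>\<pi>\<^sub>1\<close>.
\<close>

section \<open>Hahn--Banach extension\<close>

lemma subspace_sum_line:
  assumes "subspace S"
  shows "subspace {u + t *\<^sub>R v | u t. u \<in> S}"
proof -
  have "{u + t *\<^sub>R v | u t. u \<in> S} = {u + w | u w. u \<in> S \<and> w \<in> span {v}}"
    by (auto simp: span_singleton)
  then show ?thesis using subspace_sums[OF assms subspace_span] by simp
qed

text \<open>A real functional on a subspace of \<open>X\<close>, dominated by \<open>C\<cdot>\<parallel>\<cdot>\<parallel>\<close>, represented by its
  graph in \<open>X \<times> \<real>\<close>: this avoids carrying a domain alongside a partial function.\<close>

definition dominated_graph :: "real \<Rightarrow> ('a::real_normed_vector \<times> real) set \<Rightarrow> bool" where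
  "dominated_graph C G \<longleftrightarrow> subspace G \<and> (\<forall>(x, y)\<in>G. y \<le> C * norm x)"

lemma dominated_graph_unique:
  assumes G: "dominated_graph C G" and "(x, y) \<in> G" "(x, y') \<in> G"
  shows "y = y'"
proof -
  have "(x, y) - (x, y') \<in> G" "(x, y') - (x, y) \<in> G"
    using assms subspace_diff unfolding dominated_graph_def by blast+
  then have "y - y' \<le> 0" "y' - y \<le> 0" using G unfolding dominated_graph_def by auto
  then show ?thesis by simp
qed

lemma dominated_graph_Union_chain:
  assumes "Ch \<noteq> {}" and chain: "chain\<^sub>\<subseteq> Ch" and dom: "\<forall>G\<in>Ch. dominated_graph C G"
  shows "dominated_graph C (\<Union>Ch)"
proof -
  have sub: "subspace G" if "G \<in> Ch" for G using that dom unfolding dominated_graph_def by blast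
  have "subspace (\<Union>Ch)"
    unfolding subspace_def
  proof (intro conjI ballI allI)
    obtain G where "G \<in> Ch" using assms(1) by blast
    then show "0 \<in> \<Union>Ch" using sub subspace_0 by blast
  next
    fix u v assume "u \<in> \<Union>Ch" "v \<in> \<Union>Ch"
    then obtain X Y where XY: "X \<in> Ch" "Y \<in> Ch" "u \<in> X" "v \<in> Y" by blast
    from chain XY(1,2) have "X \<subseteq> Y \<or> Y \<subseteq> X" unfolding chain_subset_def by blast
    with XY sub have "u + v \<in> X \<or> u + v \<in> Y" by (meson subsetD subspace_add)
    then show "u + v \<in> \<Union>Ch" using XY by blast
  next
    fix c u assume "u \<in> \<Union>Ch"
    then show "c *\<^sub>R u \<in> \<Union>Ch" using sub subspace_scale by blast
  qed
  moreover have "\<forall>(x, y)\<in>\<Union>Ch. y \<le> C * norm x"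
    using dom unfolding dominated_graph_def by fastforce
  ultimately show ?thesis unfolding dominated_graph_def by blast
qed

lemma dominated_graph_extension_constant:
  assumes G: "dominated_graph C G" and "C \<ge> 0"
  obtains c where "\<forall>(x, y)\<in>G. y - C * norm (x - z) \<le> c" and "\<forall>(x, y)\<in>G. c \<le> C * norm (x + z) - y"
proof -
  have below_above: "y1 - C * norm (x1 - z) \<le> C * norm (x2 + z) - y2"
    if "(x1, y1) \<in> G" "(x2, y2) \<in> G" for x1 y1 x2 y2
  proof -
    have "(x1 + x2, y1 + y2) \<in> G"
      using that G subspace_add[of G "(x1, y1)" "(x2, y2)"] unfolding dominated_graph_def by simp
    then have "y1 + y2 \<le> C * norm (x1 + x2)" using G unfolding dominated_graph_def by blast
    also have "\<dots> \<le> C * (norm (x1 - z) + norm (x2 + z))"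
      using norm_triangle_ineq[of "x1 - z" "x2 + z"] \<open>C \<ge> 0\<close> by (simp add: mult_left_mono)
    finally show ?thesis by (simp add: algebra_simps)
  qed
  define P where "P = {y - C * norm (x - z) | x y. (x, y) \<in> G}"
  have "(0, 0) \<in> G" using G subspace_0[of G] unfolding dominated_graph_def by (simp add: zero_prod_def)
  then have "P \<noteq> {}" unfolding P_def by blast
  have "bdd_above P" unfolding bdd_above_def P_def using below_above[OF _ \<open>(0, 0) \<in> G\<close>] by auto
  have upper: "Sup P \<le> C * norm (x + z) - y" if "(x, y) \<in> G" for x y
  proof (rule cSup_least[OF \<open>P \<noteq> {}\<close>])
    fix p assume "p \<in> P"
    then obtain x' y' where "(x', y') \<in> G" "p = y' - C * norm (x' - z)" unfolding P_def by blast
    then show "p \<le> C * norm (x + z) - y" using below_above that by blast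
  qed
  have lower: "y - C * norm (x - z) \<le> Sup P" if "(x, y) \<in> G" for x y
  proof (rule cSup_upper[OF _ \<open>bdd_above P\<close>])
    show "y - C * norm (x - z) \<in> P" using that unfolding P_def by blast
  qed
  show thesis by (rule that[of "Sup P"]) (auto simp: upper lower)
qed

lemma dominated_graph_step_bound:
  assumes G: "subspace G" and above: "\<forall>(x, y)\<in>G. c \<le> C * norm (x + z) - y"
    and "(x, y) \<in> G" and t: "t > 0"
  shows "y + t * c \<le> C * norm (x + t *\<^sub>R z)"
proof -
  have "(1 / t) *\<^sub>R (x, y) \<in> G" using subspace_scale[OF G \<open>(x, y) \<in> G\<close>] .
  then have "c \<le> C * norm ((1 / t) *\<^sub>R x + z) - y / t" using above by auto
  then have "t * c \<le> C * (t * norm ((1 / t) *\<^sub>R x + z)) - y"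
    using t by (simp add: field_simps)
  also have "t * norm ((1 / t) *\<^sub>R x + z) = norm (x + t *\<^sub>R z)"
    using t by (simp add: scaleR_add_right flip: norm_scaleR[of t, simplified abs_of_pos[OF t]])
  finally show ?thesis by simp
qed

lemma dominated_graph_extend:
  assumes G: "dominated_graph C G"
    and below: "\<forall>(x, y)\<in>G. y - C * norm (x - z) \<le> c"
    and above: "\<forall>(x, y)\<in>G. c \<le> C * norm (x + z) - y"
  shows "dominated_graph C {u + t *\<^sub>R (z, c) | u t. u \<in> G}"
proof -
  have sub: "subspace G" using G unfolding dominated_graph_def by blast
  have "y + t * c \<le> C * norm (x + t *\<^sub>R z)" if "(x, y) \<in> G" for x y t
  proof (cases t "0::real" rule: linorder_cases)
    case less
    \<comment> \<open>the hypotheses on \<open>c\<close> are symmetric under \<open>(z, c) \<mapsto> (-z, -c)\<close>\<close>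
    have "\<forall>(x, y)\<in>G. - c \<le> C * norm (x + - z) - y" using below by auto
    from dominated_graph_step_bound[OF sub this that, of "- t"] less show ?thesis by simp
  next
    case equal
    then show ?thesis using G that unfolding dominated_graph_def by auto
  next
    case greater
    then show ?thesis using dominated_graph_step_bound[OF sub above that] by simp
  qed
  then show ?thesis using subspace_sum_line[OF sub] unfolding dominated_graph_def by auto
qed

lemma dominated_graph_extend_to_point:
  assumes G: "dominated_graph C G" and "C \<ge> 0"
  obtains G' c where "G \<subseteq> G'" "dominated_graph C G'" "(z, c) \<in> G'"
proof -
  obtain c where c: "\<forall>(x, y)\<in>G. y - C * norm (x - z) \<le> c" "\<forall>(x, y)\<in>G. c \<le> C * norm (x + z) - y"
    using dominated_graph_extension_constant[OF assms] .
  define G' where "G' = {u + t *\<^sub>R (z, c) | u t. u \<in> G}"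
  have "G \<subseteq> G'"
  proof
    fix u assume "u \<in> G"
    then show "u \<in> G'" unfolding G'_def by (intro CollectI exI[of _ u] exI[of _ 0]) (simp add: zero_prod_def)
  qed
  moreover have "dominated_graph C G'" unfolding G'_def using dominated_graph_extend[OF G c] .
  moreover have "(z, c) \<in> G'"
    using G subspace_0[of G] unfolding G'_def dominated_graph_def
    by (intro CollectI exI[of _ 0] exI[of _ 1]) simp
  ultimately show thesis by (rule that)
qed

lemma dominated_graph_maximal_extension:
  assumes G0: "dominated_graph C G0" and "C \<ge> 0"
  obtains G where "G0 \<subseteq> G" "dominated_graph C G" "\<forall>z. \<exists>y. (z, y) \<in> G"
proof -
  define A where "A = {G. G0 \<subseteq> G \<and> dominated_graph C G}"
  have "\<exists>U\<in>A. \<forall>X\<in>Ch. X \<subseteq> U" if Ch: "Ch \<in> chains A" for Ch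
  proof (cases "Ch = {}")
    case True
    then show ?thesis using G0 unfolding A_def by blast
  next
    case False
    have "chain\<^sub>\<subseteq> Ch" "\<forall>G\<in>Ch. dominated_graph C G" "G0 \<subseteq> \<Union>Ch"
      using Ch False unfolding chains_def A_def by blast+
    then have "\<Union>Ch \<in> A" using dominated_graph_Union_chain[OF False] unfolding A_def by blast
    then show ?thesis by blast
  qed
  then obtain G where G: "G \<in> A" and max: "\<forall>X\<in>A. G \<subseteq> X \<longrightarrow> X = G"
    using Zorn_Lemma2[of A] by blast
  have "\<exists>y. (z, y) \<in> G" for z
  proof -
    have "dominated_graph C G" using G unfolding A_def by blast
    from dominated_graph_extend_to_point[OF this \<open>C \<ge> 0\<close>]
    obtain G' c where G': "G \<subseteq> G'" "dominated_graph C G'" "(z, c) \<in> G'" .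
    then have "G' \<in> A" using G unfolding A_def by auto
    then have "G' = G" using max G'(1) by blast
    then show ?thesis using G'(3) by blast
  qed
  with G show thesis unfolding A_def by (intro that[of G]) auto
qed

lemma total_dominated_graph_functional:
  assumes G: "dominated_graph C G" and total: "\<forall>z. \<exists>y. (z, y) \<in> G" and "C \<ge> 0"
  obtains \<phi> :: "'a::real_normed_vector \<Rightarrow>\<^sub>L real" where "norm \<phi> \<le> C" "\<forall>(x, y)\<in>G. \<phi> x = y"
proof -
  have sub: "subspace G" and bound: "\<And>x y. (x, y) \<in> G \<Longrightarrow> y \<le> C * norm x"
    using G unfolding dominated_graph_def by auto
  define g where "g x = (THE y. (x, y) \<in> G)" for x
  have g_eq: "g x = y" if "(x, y) \<in> G" for x y
    unfolding g_def using that dominated_graph_unique[OF G] by blast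
  have gG: "(x, g x) \<in> G" for x
  proof -
    obtain y where "(x, y) \<in> G" using total by blast
    then show ?thesis using g_eq by simp
  qed
  have add: "g (x + y) = g x + g y" for x y
    using g_eq subspace_add[OF sub gG[of x] gG[of y]] by simp
  have scale: "g (r *\<^sub>R x) = r * g x" for r x
    using g_eq subspace_scale[OF sub gG[of x], of r] by simp
  have abs_bound: "\<bar>g x\<bar> \<le> C * norm x" for x
    using bound[OF gG[of x]] bound[OF gG[of "- x"]] scale[of "- 1" x] by simp
  have "bounded_linear g"
    by (rule bounded_linear_intro[where K = C]) (use add scale abs_bound in \<open>auto simp: mult.commute\<close>)
  then have g: "blinfun_apply (Blinfun g) = g" by (rule bounded_linear_Blinfun_apply)
  show thesis
  proof (rule that)
    show "norm (Blinfun g) \<le> C"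
      by (rule norm_blinfun_bound) (use \<open>C \<ge> 0\<close> abs_bound g in simp_all)
    show "\<forall>(x, y)\<in>G. Blinfun g x = y" using g_eq by (auto simp: g)
  qed
qed

lemma hahn_banach_dominated_graph:
  assumes "dominated_graph C G0" and "C \<ge> 0"
  obtains \<phi> :: "'a::real_normed_vector \<Rightarrow>\<^sub>L real" where "norm \<phi> \<le> C" "\<forall>(x, y)\<in>G0. \<phi> x = y"
proof -
  obtain G where "G0 \<subseteq> G" "dominated_graph C G" "\<forall>z. \<exists>y. (z, y) \<in> G"
    using dominated_graph_maximal_extension[OF assms] .
  then obtain \<phi> :: "'a \<Rightarrow>\<^sub>L real" where "norm \<phi> \<le> C" "\<forall>(x, y)\<in>G. \<phi> x = y"
    using total_dominated_graph_functional[OF _ _ \<open>C \<ge> 0\<close>] by blast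
  with \<open>G0 \<subseteq> G\<close> show thesis by (intro that[of \<phi>]) auto
qed

lemma exists_functional_separating_subspace:
  fixes M :: "'a::real_normed_vector set"
  assumes M: "subspace M" and d: "d > 0" and dist: "\<forall>m\<in>M. d \<le> norm (n - m)"
  obtains \<phi> :: "'a \<Rightarrow>\<^sub>L real" where "\<phi> n = 1" "\<forall>m\<in>M. \<phi> m = 0" "norm \<phi> \<le> 1 / d"
proof -
  define G0 where "G0 = {u + t *\<^sub>R (n, 1 :: real) | u t. u \<in> M \<times> {0}}"
  have "t \<le> 1 / d * norm (m + t *\<^sub>R n)" if "m \<in> M" for m t
  proof (cases "t = 0")
    case False
    have "- (1 / t) *\<^sub>R m \<in> M" using subspace_scale[OF M that, of "- (1 / t)"] by simp
    then have "d \<le> norm (n - - (1 / t) *\<^sub>R m)" using dist by blast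
    then have "\<bar>t\<bar> * d \<le> \<bar>t\<bar> * norm (n - - (1 / t) *\<^sub>R m)" by (rule mult_left_mono) simp
    also have "\<dots> = norm (m + t *\<^sub>R n)"
      using False by (simp flip: norm_scaleR add: algebra_simps)
    finally have "\<bar>t\<bar> * d \<le> norm (m + t *\<^sub>R n)" .
    moreover have "t * d \<le> \<bar>t\<bar> * d" using d by (simp add: mult_right_mono)
    ultimately have "t * d \<le> norm (m + t *\<^sub>R n)" by linarith
    then show ?thesis using d by (simp add: pos_le_divide_eq)
  qed (use d in simp)
  moreover have "subspace G0"
    unfolding G0_def by (rule subspace_sum_line[OF subspace_Times[OF M subspace_single_0]])
  ultimately have "dominated_graph (1 / d) G0" unfolding dominated_graph_def G0_def by auto
  then obtain \<phi> :: "'a \<Rightarrow>\<^sub>L real" where "norm \<phi> \<le> 1 / d" and \<phi>: "\<forall>(x, y)\<in>G0. \<phi> x = y"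
    using hahn_banach_dominated_graph d by (metis less_eq_real_def zero_less_divide_1_iff)
  moreover have "(n, 1) \<in> G0"
    unfolding G0_def using subspace_0[OF M] by (intro CollectI exI[of _ 0] exI[of _ 1]) (simp add: zero_prod_def)
  moreover have "(m, 0) \<in> G0" if "m \<in> M" for m
    unfolding G0_def using that by (intro CollectI exI[of _ "(m, 0)"] exI[of _ 0]) simp
  ultimately show thesis using that by fastforce
qed

lemma exists_functional_separating_closed_subspace:
  fixes M :: "'a::real_normed_vector set"
  assumes "subspace M" "closed M" "n \<notin> M"
  obtains \<phi> :: "'a \<Rightarrow>\<^sub>L real" where "\<phi> n = 1" "\<forall>m\<in>M. \<phi> m = 0"
proof -
  have "infdist n M > 0"
    using infdist_pos_not_in_closed[OF assms(2) _ assms(3)] subspace_0[OF assms(1)] by blast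
  moreover have "\<forall>m\<in>M. infdist n M \<le> norm (n - m)"
    using infdist_le[of _ M n] by (simp add: dist_norm)
  ultimately show thesis using exists_functional_separating_subspace[OF assms(1)] that by metis
qed

lemma exists_functional_extending_limits:
  fixes e :: "'i \<Rightarrow> 'a::real_normed_vector"
  assumes "F \<noteq> bot" and "bounded (range e)"
  obtains E :: "('a \<Rightarrow>\<^sub>L real) \<Rightarrow>\<^sub>L real"
    where "\<And>\<psi> l. ((\<lambda>\<alpha>. blinfun_apply \<psi> (e \<alpha>)) \<longlongrightarrow> l) F \<Longrightarrow> E \<psi> = l"
proof -
  obtain K where K: "\<And>\<alpha>. norm (e \<alpha>) \<le> K" using assms(2) unfolding bounded_iff by auto
  then have "K \<ge> 0" using norm_ge_zero order_trans by blast
  define G0 where "G0 = {(\<psi>, l :: real). ((\<lambda>\<alpha>. blinfun_apply \<psi> (e \<alpha>)) \<longlongrightarrow> l) F}"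
  have "subspace G0"
    unfolding subspace_def G0_def
    by (auto simp: zero_prod_def plus_blinfun.rep_eq scaleR_blinfun.rep_eq intro: tendsto_add tendsto_mult_left)
  moreover have "l \<le> K * norm \<psi>" if "((\<lambda>\<alpha>. \<psi> (e \<alpha>)) \<longlongrightarrow> l) F" for \<psi> :: "'a \<Rightarrow>\<^sub>L real" and l
  proof (rule tendsto_le[OF assms(1) tendsto_const that], rule always_eventually, rule allI)
    fix \<alpha>
    have "\<psi> (e \<alpha>) \<le> norm \<psi> * norm (e \<alpha>)" using norm_blinfun[of \<psi> "e \<alpha>"] by simp
    also have "\<dots> \<le> norm \<psi> * K" by (rule mult_left_mono[OF K]) simp
    finally show "\<psi> (e \<alpha>) \<le> K * norm \<psi>" by (simp add: mult.commute)
  qed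
  ultimately have "dominated_graph K G0" unfolding dominated_graph_def G0_def by auto
  then obtain E :: "('a \<Rightarrow>\<^sub>L real) \<Rightarrow>\<^sub>L real" where "\<forall>(\<psi>, l)\<in>G0. E \<psi> = l"
    using hahn_banach_dominated_graph \<open>K \<ge> 0\<close> by blast
  then show thesis unfolding G0_def by (intro that) auto
qed

section \<open>Adjoints and the canonical embedding\<close>

lemma adj_apply:
  assumes "bounded_bilinear f"
  shows "adj f z x y = z (f x y)"
proof -
  have "bounded_linear (\<lambda>y. z (f x y))"
    using bounded_bilinear.bounded_linear_right[OF assms]
    by (rule bounded_linear_compose[OF blinfun.bounded_linear_right])
  then show ?thesis unfolding adj_def by (simp add: bounded_linear_Blinfun_apply)
qed

lemma bounded_bilinear_adj:
  assumes f: "bounded_bilinear f"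
  shows "bounded_bilinear (adj f)"
proof -
  obtain K where K: "\<And>a b. norm (f a b) \<le> norm a * norm b * K" and "K \<ge> 0"
    using bounded_bilinear.pos_bounded[OF f] by (metis less_eq_real_def)
  have "norm (adj f z x) \<le> norm z * norm x * K" for z x
  proof (rule norm_blinfun_bound)
    show "0 \<le> norm z * norm x * K" using \<open>K \<ge> 0\<close> by simp
    fix y
    have "norm (adj f z x y) \<le> norm z * norm (f x y)"
      using norm_blinfun[of z "f x y"] by (simp add: adj_apply[OF f])
    also have "\<dots> \<le> norm z * (norm x * norm y * K)" by (rule mult_left_mono[OF K]) simp
    finally show "norm (adj f z x y) \<le> norm z * norm x * K * norm y" by (simp add: ac_simps)
  qed
  then show ?thesis
  proof (intro bounded_bilinear.intro exI allI)
  qed (rule blinfun_eqI; simp add: adj_apply[OF f] blinfun.bilinear_simps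
      bounded_bilinear.add_left[OF f] bounded_bilinear.scaleR_left[OF f])+
qed

lemma bounded_bilinear_bflip: "bounded_bilinear f \<Longrightarrow> bounded_bilinear (bflip f)"
  unfolding bflip_def by (rule bounded_bilinear.flip)

lemma bflip_apply: "bflip f y x = f x y"
  by (simp add: bflip_def)

lemma adj_bflip_apply:
  assumes "bounded_bilinear f"
  shows "adj (bflip f) z y x = z (f x y)"
  using adj_apply[OF bounded_bilinear_bflip[OF assms]] by (simp add: bflip_apply)

lemma canon_embed_apply: "canon_embed x f = f x"
  unfolding canon_embed_def by (simp add: bounded_linear_Blinfun_apply blinfun.bounded_linear_left)

lemma bounded_linear_canon_embed: "bounded_linear canon_embed"
proof (rule bounded_linear_intro[where K = 1])
  show "norm (canon_embed x) \<le> norm x * 1" for x :: 'a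
  proof (rule norm_blinfun_bound)
    show "norm (canon_embed x \<phi>) \<le> norm x * 1 * norm \<phi>" for \<phi>
      using norm_blinfun[of \<phi> x] by (simp add: canon_embed_apply mult.commute)
  qed simp
qed (auto intro!: blinfun_eqI simp: canon_embed_apply blinfun.bilinear_simps)

lemma norm_le_norm_canon_embed: "norm x \<le> norm (canon_embed x)"
proof (cases "x = 0")
  case False
  obtain \<phi> :: "'a \<Rightarrow>\<^sub>L real" where "\<phi> x = 1" and "norm \<phi> \<le> 1 / norm x"
    using exists_functional_separating_subspace[OF subspace_single_0, of "norm x" x] False by auto
  then have "1 \<le> norm (canon_embed x) * (1 / norm x)"
    using norm_blinfun[of "canon_embed x" \<phi>] mult_left_mono[of _ _ "norm (canon_embed x)"]
    by (force simp: canon_embed_apply)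
  then show ?thesis using False by (simp add: field_simps)
qed simp

lemma closed_range_canon_embed: "closed (range (canon_embed :: 'a::banach \<Rightarrow> _))"
proof -
  have "complete (range (canon_embed :: 'a \<Rightarrow> _))"
    by (rule complete_isometric_image[where e = 1])
      (auto simp: bounded_linear_canon_embed norm_le_norm_canon_embed complete_UNIV)
  then show ?thesis by (simp add: complete_eq_closed)
qed

section \<open>Arens regularity and reflexivity\<close>

lemma arens_regular_if_reflexive:
  fixes f :: "'a::real_normed_vector \<Rightarrow> 'b::real_normed_vector \<Rightarrow> 'c::real_normed_vector"
  assumes f: "bounded_bilinear f" and "reflexive_space TYPE('b)"
  shows "arens_regular f"
  unfolding arens_regular_def
proof (intro ext blinfun_eqI)
  fix m n \<Phi>
  obtain y :: 'b where n: "n = canon_embed y" using assms(2) unfolding reflexive_space_def surj_def by blast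
  note f' = bounded_bilinear_adj[OF f] and r' = bounded_bilinear_adj[OF bounded_bilinear_bflip[OF f]]
  have "adj (adj f) n \<Phi> = adj (bflip f) \<Phi> y"
    by (rule blinfun_eqI) (simp add: adj_apply f f' n canon_embed_apply adj_bflip_apply)
  then show "adj (adj (adj f)) m n \<Phi> = bflip (adj (adj (adj (bflip f)))) m n \<Phi>"
    by (simp add: adj_apply bounded_bilinear_adj f' r' n canon_embed_apply bflip_apply)
qed

lemma reflexive_if_arens_regular:
  fixes g :: "('x::banach \<Rightarrow>\<^sub>L real) \<Rightarrow> 'x \<Rightarrow> 'z::real_normed_vector" and E :: "'z \<Rightarrow>\<^sub>L real"
  assumes g: "bounded_bilinear g" and "arens_regular g" and E: "\<And>\<xi> x. E (g \<xi> x) = \<xi> x"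
  shows "reflexive_space TYPE('x)"
  unfolding reflexive_space_def
proof (rule ccontr)
  assume "\<not> surj (canon_embed :: 'x \<Rightarrow> _)"
  then obtain n where n: "n \<notin> range (canon_embed :: 'x \<Rightarrow> _)" by blast
  have "subspace (range (canon_embed :: 'x \<Rightarrow> _))"
    using linear_subspace_image[OF bounded_linear.linear[OF bounded_linear_canon_embed] subspace_UNIV] .
  from exists_functional_separating_closed_subspace[OF this closed_range_canon_embed n]
  obtain m :: "(('x \<Rightarrow>\<^sub>L real) \<Rightarrow>\<^sub>L real) \<Rightarrow>\<^sub>L real"
    where m: "m n = 1" "\<forall>x. m (canon_embed x) = 0"
    by (metis rangeI)
  note g' = bounded_bilinear_adj[OF g] and r' = bounded_bilinear_adj[OF bounded_bilinear_bflip[OF g]]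
  have "adj g E \<xi> = \<xi>" for \<xi> by (rule blinfun_eqI) (simp add: adj_apply g E)
  then have "adj (adj g) n E = n" by (intro blinfun_eqI) (simp add: adj_apply g')
  then have "adj (adj (adj g)) m n E = 1" by (simp add: adj_apply bounded_bilinear_adj[OF g'] m)
  moreover have "adj (bflip g) E x = canon_embed x" for x
    by (rule blinfun_eqI) (simp add: adj_bflip_apply g E canon_embed_apply)
  then have "adj (adj (bflip g)) m E = 0" by (intro blinfun_eqI) (simp add: adj_apply r' m)
  then have "bflip (adj (adj (adj (bflip g)))) m n E = 0"
    by (simp add: adj_apply bounded_bilinear_adj[OF r'] bflip_apply)
  ultimately show False using \<open>arens_regular g\<close> unfolding arens_regular_def by simp
qed

lemma arens_regular_adj_iff_reflexive:
  fixes \<rho> :: "'x::banach \<Rightarrow> 'a::real_normed_vector \<Rightarrow> 'x" and e :: "'i \<Rightarrow> 'a"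
  assumes \<rho>: "bounded_bilinear \<rho>" and "F \<noteq> bot" and "bounded (range e)"
    and approx: "\<And>x. ((\<lambda>\<alpha>. \<rho> x (e \<alpha>)) \<longlongrightarrow> x) F"
  shows "arens_regular (adj \<rho>) \<longleftrightarrow> reflexive_space TYPE('x)"
proof
  assume "arens_regular (adj \<rho>)"
  obtain E :: "('a \<Rightarrow>\<^sub>L real) \<Rightarrow>\<^sub>L real"
    where E: "\<And>\<psi> l. ((\<lambda>\<alpha>. blinfun_apply \<psi> (e \<alpha>)) \<longlongrightarrow> l) F \<Longrightarrow> E \<psi> = l"
    using exists_functional_extending_limits[OF assms(2,3)] by blast
  have "((\<lambda>\<alpha>. adj \<rho> \<xi> x (e \<alpha>)) \<longlongrightarrow> \<xi> x) F" for \<xi> x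
    unfolding adj_apply[OF \<rho>] using approx by (rule blinfun.tendsto[OF tendsto_const])
  then have "E (adj \<rho> \<xi> x) = \<xi> x" for \<xi> x by (rule E)
  then show "reflexive_space TYPE('x)"
    by (rule reflexive_if_arens_regular[OF bounded_bilinear_adj[OF \<rho>] \<open>arens_regular (adj \<rho>)\<close>])
next
  assume "reflexive_space TYPE('x)"
  then show "arens_regular (adj \<rho>)" by (rule arens_regular_if_reflexive[OF bounded_bilinear_adj[OF \<rho>]])
qed

theorem proposition3p6:
  fixes \<pi>1 :: "'a::{real_normed_algebra, banach} \<Rightarrow> 'x::banach \<Rightarrow> 'x"
    and \<pi>2 :: "'x \<Rightarrow> 'a \<Rightarrow> 'x"
  assumes "left_banach_module \<pi>1"
    and "right_banach_module \<pi>2"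
  shows "((\<exists>(e::'i \<Rightarrow> 'a) F. bounded_left_approx_identity \<pi>1 e F) \<longrightarrow>
           (arens_regular (adj (bflip \<pi>1)) \<longleftrightarrow> reflexive_space TYPE('x)))
       \<and> ((\<exists>(e::'i \<Rightarrow> 'a) F. bounded_right_approx_identity \<pi>2 e F) \<longrightarrow>
           (arens_regular (adj \<pi>2) \<longleftrightarrow> reflexive_space TYPE('x)))"
proof (intro conjI impI; elim exE)
  fix e :: "'i \<Rightarrow> 'a" and F
  have "bounded_bilinear (bflip \<pi>1)"
    using assms(1) bounded_bilinear_bflip unfolding left_banach_module_def by blast
  moreover assume "bounded_left_approx_identity \<pi>1 e F"
  then have "F \<noteq> bot" "bounded (range e)" "\<And>x. ((\<lambda>\<alpha>. bflip \<pi>1 x (e \<alpha>)) \<longlongrightarrow> x) F"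
    unfolding bounded_left_approx_identity_def bflip_apply by auto
  ultimately show "arens_regular (adj (bflip \<pi>1)) \<longleftrightarrow> reflexive_space TYPE('x)"
    by (rule arens_regular_adj_iff_reflexive)
next
  fix e :: "'i \<Rightarrow> 'a" and F
  have "bounded_bilinear \<pi>2" using assms(2) unfolding right_banach_module_def by blast
  moreover assume "bounded_right_approx_identity \<pi>2 e F"
  then have "F \<noteq> bot" "bounded (range e)" "\<And>x. ((\<lambda>\<alpha>. \<pi>2 x (e \<alpha>)) \<longlongrightarrow> x) F"
    unfolding bounded_right_approx_identity_def by auto
  ultimately show "arens_regular (adj \<pi>2) \<longleftrightarrow> reflexive_space TYPE('x)"
    by (rule arens_regular_adj_iff_reflexive)
qed

end
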